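(* For $A\in\mathrm{Sym}(3,\mathbb{C})$ let $c_3(A)$ be the cubic form $\underline{x}\mapsto\det(\underline{x}\,|\,A\underline{x}\,|\,A^2\underline{x})$ on $\mathbb{C}^3$. Then the map $c_3:\mathrm{Sym}(3,\mathbb{C})\to\mathrm{S}^3(\mathbb{C}^3)^\star$ is not identically zero, and for every $A\in\mathrm{Sym}(3,\mathbb{C})$ the cubic form $c_3(A)$ lies in the kernel of the Laplace operator $\Delta=\sum_{i=1}^3\frac{\partial^2}{\partial x_i^2}$.
   Context: $\mathrm{Sym}(3,\mathbb{C})$ is the space of complex symmetric $3\times3$ matrices; $\mathrm{S}^3(\mathbb{C}^3)^\star$ is the space of homogeneous cubic polynomials in $x_1,x_2,x_3$; $(\underline{x}\,|\,A\underline{x}\,|\,A^2\underline{x})$ is the matrix with these columns. *)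

theory Defs
  imports "HOL-Analysis.Analysis"
begin

definition sym3 :: "complex^3^3 \<Rightarrow> bool" where
  "sym3 A \<longleftrightarrow> transpose A = A"

definition cols3 :: "complex^3 \<Rightarrow> complex^3 \<Rightarrow> complex^3 \<Rightarrow> complex^3^3" where
  "cols3 u v w = (\<chi> i j. if j = 1 then u $ i else if j = 2 then v $ i else w $ i)"

definition c3 :: "complex^3^3 \<Rightarrow> complex^3 \<Rightarrow> complex" where
  "c3 A x = det (cols3 x (A *v x) ((A ** A) *v x))"

definition laplacian :: "(complex^3 \<Rightarrow> complex) \<Rightarrow> complex^3 \<Rightarrow> complex" where
  "laplacian f x = (\<Sum>i\<in>UNIV. deriv (deriv (\<lambda>t. f (x + axis i t))) 0)"

end

theory Submission
  imports Defs "HOL-Computational_Algebra.Polynomial"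
begin

text \<open>Along every line \<open>t \<mapsto> x + t v\<close> the form \<open>c\<^sub>3(A)\<close> is the determinant of a matrix
  with affine entries, hence a cubic polynomial in \<open>t\<close>. For cubics the second derivative at 0 equals
  the second central difference \<open>g(1) + g(-1) - 2g(0)\<close>, so the Laplacian of \<open>c\<^sub>3(A)\<close> is a finite
  sum of values of \<open>c\<^sub>3(A)\<close>; that sum is a polynomial identity in the entries of \<open>A\<close> and \<open>x\<close>
  which holds as soon as \<open>A\<close> is symmetric. Non-vanishing: for \<open>A = diag(1,2,3)\<close> and
  \<open>x = (1,1,1)\<close>, \<open>c\<^sub>3(A)(x)\<close> is a Vandermonde determinant.\<close>

lemma deriv_poly: "deriv (poly p) = poly (pderiv p)"
  by (rule ext, rule DERIV_imp_deriv) (rule poly_DERIV)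

lemma deriv2_poly_at_0_eq_central_difference:
  fixes p :: "'a::real_normed_field poly"
  assumes "degree p \<le> 3"
  shows "deriv (deriv (poly p)) 0 = poly p 1 + poly p (-1) - 2 * poly p 0"
proof -
  have "p = [:coeff p 0, coeff p 1, coeff p 2, coeff p 3:]"
    using assms by (auto simp: poly_eq_iff coeff_pCons numeral_eq_Suc coeff_eq_0 split: nat.split)
  then obtain a b c d where p: "p = [:a, b, c, d:]" by blast
  show ?thesis
    by (simp add: deriv_poly p pderiv_pCons algebra_simps)
qed

lemma det_of_affine_entries:
  fixes P :: "'n::finite \<Rightarrow> 'n \<Rightarrow> 'a::comm_ring_1 poly"
  assumes "\<And>i j. degree (P i j) \<le> 1"
  shows "\<exists>q. degree q \<le> CARD('n) \<and> (\<forall>t. det (\<chi> i j. poly (P i j) t) = poly q t)"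
proof (intro exI conjI allI)
  let ?q = "\<Sum>p | p permutes (UNIV :: 'n set). of_int (sign p) * (\<Prod>i\<in>UNIV. P i (p i))"
  show "det (\<chi> i j. poly (P i j) t) = poly ?q t" for t
    by (simp add: det_def poly_sum poly_prod)
  show "degree ?q \<le> CARD('n)"
  proof (rule degree_sum_le)
    fix p
    have "degree (\<Prod>i\<in>UNIV. P i (p i)) \<le> (\<Sum>i\<in>(UNIV :: 'n set). 1)"
      using degree_prod_sum_le[of UNIV "\<lambda>i. P i (p i)"] assms
        sum_mono[of UNIV "\<lambda>i. degree (P i (p i))" "\<lambda>_. 1"]
      by (simp add: o_def)
    then show "degree (of_int (sign p) * (\<Prod>i\<in>UNIV. P i (p i))) \<le> CARD('n)"
      by (simp add: of_int_poly) (meson degree_smult_le order_trans)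
  qed simp
qed

lemma matrix_vector_mult_line_component:
  fixes M :: "'a::comm_ring_1^'n^'m"
  shows "(M *v (x + t *s v)) $ k = poly [:(M *v x) $ k, (M *v v) $ k:] t"
  by (simp add: matrix_vector_mult_def sum.distrib sum_distrib_left algebra_simps)

lemma c3_along_line_is_cubic:
  "\<exists>q. degree q \<le> 3 \<and> (\<forall>t. c3 A (x + t *s v) = poly q t)"
proof -
  define M :: "3 \<Rightarrow> complex^3^3" where "M j = (if j = 1 then mat 1 else if j = 2 then A else A ** A)" for j
  define P where "P k j = [:(M j *v x) $ k, (M j *v v) $ k:]" for k j
  have "cols3 (x + t *s v) (A *v (x + t *s v)) ((A ** A) *v (x + t *s v)) = (\<chi> k j. poly (P k j) t)" for t
    by (simp add: vec_eq_iff cols3_def P_def M_def matrix_vector_mult_line_component)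
  moreover have "degree (P k j) \<le> 1" for k j
    by (simp add: P_def)
  ultimately show ?thesis
    using det_of_affine_entries[of P] by (simp add: c3_def)
qed

lemma laplacian_eq_sum_central_differences:
  assumes "\<And>v. \<exists>q. degree q \<le> 3 \<and> (\<forall>t. f (x + t *s v) = poly q t)"
  shows "laplacian f x = (\<Sum>i\<in>UNIV. f (x + axis i 1) + f (x + axis i (-1)) - 2 * f x)"
proof -
  have "deriv (deriv (\<lambda>t. f (x + axis i t))) 0 = f (x + axis i 1) + f (x + axis i (-1)) - 2 * f x" for i
  proof -
    have axis_eq: "axis i t = t *s axis i 1" for t :: complex
      by (simp add: vec_eq_iff axis_def)
    obtain q where "degree q \<le> 3" and q: "\<And>t. f (x + axis i t) = poly q t"
      using assms[of "axis i 1"] by (auto simp: axis_eq[symmetric])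
    moreover have "(\<lambda>t. f (x + axis i t)) = poly q"
      using q by blast
    ultimately show ?thesis
      using deriv2_poly_at_0_eq_central_difference[of q] q[of 0] q[of 1] q[of "-1"]
      by (simp add: axis_eq[of 0])
  qed
  then show ?thesis
    by (simp add: laplacian_def)
qed

lemma c3_sum_central_differences_eq_0:
  assumes "sym3 A"
  shows "(\<Sum>i\<in>UNIV. c3 A (x + axis i 1) + c3 A (x + axis i (-1)) - 2 * c3 A x) = 0"
proof -
  have "transpose A $ j $ i = A $ j $ i" for i j
    using assms by (simp add: sym3_def)
  then have sym: "A$2$1 = A$1$2" "A$3$1 = A$1$3" "A$3$2 = A$2$3"
    by (simp_all add: transpose_def)
  show ?thesis
    unfolding c3_def det_3 cols3_def sum_3
    by (simp add: matrix_matrix_mult_def matrix_vector_mult_def sum_3 axis_def sym; algebra)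
qed

theorem proposition6p1:
  shows "(\<exists>A. sym3 A \<and> c3 A \<noteq> (\<lambda>x. 0)) \<and>
         (\<forall>A. sym3 A \<longrightarrow> (\<forall>x. laplacian (c3 A) x = 0))"
proof
  define D :: "complex^3^3"
    where "D = (\<chi> i j. if i \<noteq> j then 0 else if i = 1 then 1 else if i = 2 then 2 else 3)"
  have "sym3 D"
    by (simp add: sym3_def D_def transpose_def vec_eq_iff)
  moreover have "c3 D (\<chi> i. 1) \<noteq> 0"
    by (simp add: c3_def det_3 cols3_def D_def matrix_matrix_mult_def matrix_vector_mult_def sum_3)
  ultimately show "\<exists>A. sym3 A \<and> c3 A \<noteq> (\<lambda>x. 0)"
    by (intro exI[of _ D]) auto
next
  show "\<forall>A. sym3 A \<longrightarrow> (\<forall>x. laplacian (c3 A) x = 0)"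
    by (simp add: laplacian_eq_sum_central_differences[OF c3_along_line_is_cubic]
        c3_sum_central_differences_eq_0)
qed

end
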